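(* Let $T$ be an $n$-vertex tournament with an optimal ordering $v_1,\ldots,v_n$, and let $B$ be the set of backwards edges in this ordering, with $|B|=\alpha n^2$. Suppose that the subset $B'\subseteq B$ of backwards edges of length at least $n/16$ satisfies $|B'|\ge \alpha n^2/4$. If $\alpha\le 2^{-16}$, then there exists $B''\subseteq B'$ with $|B''|\ge |B'|/2$ such that every edge of $B''$ lies in at least $n/64$ directed triangles of $T$.
   Context: Given an ordering $v_1,\ldots,v_n$ of the vertices of a tournament $T$, a backwards edge is an edge directed from $v_j$ to $v_i$ with $i<j$; its length is $j-i$. An ordering is optimal if it minimizes the number of backwards edges among all orderings of $V(T)$. A directed triangle is a set of three vertices $x,y,z$ with edges directed $x\to y$, $y\to z$, $z\to x$. *)

theory Defs
  imports Main "HOL-Library.Set_Algebras" Complex_Main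
begin

definition tournament :: "'a set \<Rightarrow> ('a \<times> 'a) set \<Rightarrow> bool" where
  "tournament V E \<longleftrightarrow> finite V \<and> E \<subseteq> V \<times> V \<and> (\<forall>v. (v, v) \<notin> E) \<and>
     (\<forall>u\<in>V. \<forall>v\<in>V. u \<noteq> v \<longrightarrow> ((u, v) \<in> E \<longleftrightarrow> (v, u) \<notin> E))"

text \<open>An ordering v_1..v_n of V, as a list (index 0 = v_1).\<close>
definition vertex_ordering :: "'a set \<Rightarrow> 'a list \<Rightarrow> bool" where
  "vertex_ordering V vs \<longleftrightarrow> distinct vs \<and> set vs = V"

definition backwards_edges :: "('a \<times> 'a) set \<Rightarrow> 'a list \<Rightarrow> ('a \<times> 'a) set" where
  "backwards_edges E vs = {(vs ! j, vs ! i) | i j. i < j \<and> j < length vs \<and> (vs ! j, vs ! i) \<in> E}"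

definition long_backwards_edges :: "('a \<times> 'a) set \<Rightarrow> 'a list \<Rightarrow> real \<Rightarrow> ('a \<times> 'a) set" where
  "long_backwards_edges E vs L =
     {(vs ! j, vs ! i) | i j. i < j \<and> j < length vs \<and> (vs ! j, vs ! i) \<in> E \<and> real (j - i) \<ge> L}"

definition optimal_ordering :: "'a set \<Rightarrow> ('a \<times> 'a) set \<Rightarrow> 'a list \<Rightarrow> bool" where
  "optimal_ordering V E vs \<longleftrightarrow> vertex_ordering V vs \<and>
     (\<forall>ws. vertex_ordering V ws \<longrightarrow> card (backwards_edges E vs) \<le> card (backwards_edges E ws))"

definition directed_triangles :: "'a set \<Rightarrow> ('a \<times> 'a) set \<Rightarrow> 'a set set" where
  "directed_triangles V E = {{x, y, z} | x y z. x \<in> V \<and> y \<in> V \<and> z \<in> V \<and>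
      (x, y) \<in> E \<and> (y, z) \<in> E \<and> (z, x) \<in> E}"

definition triangles_on_edge :: "'a set \<Rightarrow> ('a \<times> 'a) set \<Rightarrow> 'a \<times> 'a \<Rightarrow> nat" where
  "triangles_on_edge V E e = card {t \<in> directed_triangles V E. fst e \<in> t \<and> snd e \<in> t}"

end

theory Submission imports Defs begin

text \<open>Let \<open>u \<rightarrow> w\<close> be a backwards edge from position \<open>j\<close> to position \<open>i\<close>. Since the ordering
  is optimal, moving \<open>u\<close> directly in front of \<open>w\<close> (or \<open>w\<close> directly behind \<open>u\<close>) does not
  decrease the number of backwards edges, so fewer than half of the \<open>j - i - 1\<close> vertices
  strictly between them satisfy \<open>u \<rightarrow> x\<close> (resp. \<open>x \<rightarrow> w\<close>). Every remaining vertex \<open>x\<close> in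
  between closes a directed triangle \<open>u \<rightarrow> w \<rightarrow> x \<rightarrow> u\<close>, and the edges \<open>u \<rightarrow> x\<close> and
  \<open>x \<rightarrow> w\<close> are themselves backwards. Hence the edge lies in at least \<open>(j - i)/2 - d\<close>
  triangles, where \<open>d\<close> is the backwards out-degree of \<open>u\<close> or the backwards in-degree of
  \<open>w\<close>. At most \<open>64\<alpha>n\<close> vertices have backwards out-degree above \<open>n/64\<close>, and likewise for
  in-degree, so at most \<open>(64\<alpha>n)\<^sup>2 \<le> \<alpha>n\<^sup>2/16 \<le> |B'|/4\<close> long backwards edges join two such
  heavy vertices; every other long backwards edge lies in at least
  \<open>n/32 - n/64 = n/64\<close> triangles.\<close>

fun precedes :: "'a list \<Rightarrow> 'a \<Rightarrow> 'a \<Rightarrow> bool" where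
  "precedes [] x y \<longleftrightarrow> False"
| "precedes (z # zs) x y \<longleftrightarrow> (x = z \<and> y \<in> set zs) \<or> precedes zs x y"

lemma precedes_iff_nth:
  "precedes xs x y \<longleftrightarrow> (\<exists>i j. i < j \<and> j < length xs \<and> xs ! i = x \<and> xs ! j = y)"
proof (induction xs)
  case (Cons z zs)
  show ?case
  proof
    assume "precedes (z # zs) x y"
    then consider "x = z" "y \<in> set zs" | "precedes zs x y" by auto
    then show "\<exists>i j. i < j \<and> j < length (z # zs) \<and> (z # zs) ! i = x \<and> (z # zs) ! j = y"
    proof cases
      case 1
      then obtain j where "j < length zs" "zs ! j = y" by (auto simp: in_set_conv_nth)
      with 1 show ?thesis by (intro exI[of _ 0] exI[of _ "Suc j"]) auto
    next
      case 2
      then obtain i j where "i < j" "j < length zs" "zs ! i = x" "zs ! j = y" using Cons.IH by auto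
      then show ?thesis by (intro exI[of _ "Suc i"] exI[of _ "Suc j"]) auto
    qed
  next
    assume "\<exists>i j. i < j \<and> j < length (z # zs) \<and> (z # zs) ! i = x \<and> (z # zs) ! j = y"
    then obtain i j where ij: "i < j" "j < length (z # zs)" "(z # zs) ! i = x" "(z # zs) ! j = y"
      by blast
    then obtain j' where j': "j = Suc j'" by (cases j) auto
    show "precedes (z # zs) x y"
    proof (cases i)
      case 0
      with ij j' show ?thesis by auto
    next
      case (Suc i')
      with ij j' have "precedes zs x y" using Cons.IH by auto
      then show ?thesis by simp
    qed
  qed
qed simp

lemma precedes_append:
  "precedes (xs @ ys) x y \<longleftrightarrow> precedes xs x y \<or> precedes ys x y \<or> (x \<in> set xs \<and> y \<in> set ys)"
  by (induction xs) auto

lemma precedes_imp_in_set: "precedes xs x y \<Longrightarrow> x \<in> set xs \<and> y \<in> set xs"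
  by (induction xs) auto

lemma backwards_edges_eq: "backwards_edges E xs = {(x, y) \<in> E. precedes xs y x}"
  unfolding backwards_edges_def precedes_iff_nth by blast

lemma finite_successors: "finite R \<Longrightarrow> finite {y. (x, y) \<in> R}"
  using finite_Image[of R "{x}"] by (simp add: Image_singleton)

lemma finite_predecessors: "finite R \<Longrightarrow> finite {y. (y, x) \<in> R}"
  using finite_successors[of "R\<inverse>" x] by simp

lemma finite_backwards_edges: "finite (backwards_edges E xs)"
proof -
  have "backwards_edges E xs \<subseteq> set xs \<times> set xs"
    by (auto simp: backwards_edges_eq dest: precedes_imp_in_set)
  then show ?thesis by (rule finite_subset) simp
qed

text \<open>Moving \<open>u\<close> in front of the block \<open>L\<close> reverses the status of exactly the edges between
  \<open>u\<close> and \<open>L\<close>.\<close>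
lemma card_backwards_edges_move_left:
  assumes "distinct (P @ L @ u # S)"
  shows "card (backwards_edges E (P @ u # L @ S)) + card {x \<in> set L. (u, x) \<in> E} =
         card (backwards_edges E (P @ L @ u # S)) + card {x \<in> set L. (x, u) \<in> E}"
proof -
  define Out where "Out = (\<lambda>x. (u, x)) ` {x \<in> set L. (u, x) \<in> E}"
  define In where "In = (\<lambda>x. (x, u)) ` {x \<in> set L. (x, u) \<in> E}"
  define R where "R = backwards_edges E (P @ L @ u # S) - Out"
  have card_Out: "card Out = card {x \<in> set L. (u, x) \<in> E}"
    unfolding Out_def by (rule card_image) (auto simp: inj_on_def)
  have card_In: "card In = card {x \<in> set L. (x, u) \<in> E}"
    unfolding In_def by (rule card_image) (auto simp: inj_on_def)
  have Out_sub: "Out \<subseteq> backwards_edges E (P @ L @ u # S)"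
    by (auto simp: Out_def backwards_edges_eq precedes_append)
  have "card (backwards_edges E (P @ L @ u # S)) = card R + card Out"
    using card_Diff_subset[OF finite_subset[OF Out_sub finite_backwards_edges] Out_sub]
      card_mono[OF finite_backwards_edges Out_sub]
    unfolding R_def by simp
  moreover have "backwards_edges E (P @ u # L @ S) = R \<union> In" and "R \<inter> In = {}"
    using assms by (auto simp: R_def Out_def In_def backwards_edges_eq precedes_append
        dest: precedes_imp_in_set)
  then have "card (backwards_edges E (P @ u # L @ S)) = card R + card In"
    by (simp add: card_Un_disjoint R_def In_def finite_backwards_edges)
  ultimately show ?thesis using card_Out card_In by simp
qed

lemma tournament_card_out_plus_in:
  assumes "tournament V E" and "A \<subseteq> V" and "u \<in> V" and "u \<notin> A"
  shows "card {x \<in> A. (u, x) \<in> E} + card {x \<in> A. (x, u) \<in> E} = card A"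
proof -
  have "finite A" using assms(1,2) finite_subset unfolding tournament_def by blast
  moreover have "{x \<in> A. (u, x) \<in> E} \<union> {x \<in> A. (x, u) \<in> E} = A"
    and "{x \<in> A. (u, x) \<in> E} \<inter> {x \<in> A. (x, u) \<in> E} = {}"
    using assms unfolding tournament_def by auto
  ultimately show ?thesis by (metis (no_types, lifting) card_Un_disjoint finite_Un)
qed

lemma optimal_ordering_move_left:
  assumes "tournament V E" and "optimal_ordering V E (P @ L @ u # S)"
  shows "2 * card {x \<in> set L. (u, x) \<in> E} \<le> length L"
proof -
  have dist: "distinct (P @ L @ u # S)" and V: "V = set (P @ L @ u # S)"
    using assms(2) unfolding optimal_ordering_def vertex_ordering_def by auto
  then have "card (backwards_edges E (P @ L @ u # S)) \<le> card (backwards_edges E (P @ u # L @ S))"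
    using assms(2) unfolding optimal_ordering_def vertex_ordering_def by auto
  then have "card {x \<in> set L. (u, x) \<in> E} \<le> card {x \<in> set L. (x, u) \<in> E}"
    using card_backwards_edges_move_left[OF dist, of E] by linarith
  moreover have "card {x \<in> set L. (u, x) \<in> E} + card {x \<in> set L. (x, u) \<in> E} = length L"
    using tournament_card_out_plus_in[OF assms(1), of "set L" u] dist V distinct_card[of L] by auto
  ultimately show ?thesis by linarith
qed

lemma optimal_ordering_move_right:
  assumes "tournament V E" and "optimal_ordering V E (P @ u # L @ S)"
  shows "2 * card {x \<in> set L. (x, u) \<in> E} \<le> length L"
proof -
  have dist: "distinct (P @ u # L @ S)" and V: "V = set (P @ u # L @ S)"
    using assms(2) unfolding optimal_ordering_def vertex_ordering_def by auto
  then have "card (backwards_edges E (P @ u # L @ S)) \<le> card (backwards_edges E (P @ L @ u # S))"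
    using assms(2) unfolding optimal_ordering_def vertex_ordering_def by auto
  moreover have "distinct (P @ L @ u # S)" using dist by auto
  ultimately have "card {x \<in> set L. (x, u) \<in> E} \<le> card {x \<in> set L. (u, x) \<in> E}"
    using card_backwards_edges_move_left[of P L u S E] by linarith
  moreover have "card {x \<in> set L. (u, x) \<in> E} + card {x \<in> set L. (x, u) \<in> E} = length L"
    using tournament_card_out_plus_in[OF assms(1), of "set L" u] dist V distinct_card[of L] by auto
  ultimately show ?thesis by linarith
qed

lemma card_triangle_apexes_le:
  assumes "tournament V E" and "(u, w) \<in> E"
  shows "card {x \<in> V. (w, x) \<in> E \<and> (x, u) \<in> E} \<le> triangles_on_edge V E (u, w)"
  unfolding triangles_on_edge_def
proof (rule card_inj_on_le[of "\<lambda>x. {u, w, x}"])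
  show "inj_on (\<lambda>x. {u, w, x}) {x \<in> V. (w, x) \<in> E \<and> (x, u) \<in> E}"
  proof (rule inj_onI)
    fix x y
    assume x: "x \<in> {x \<in> V. (w, x) \<in> E \<and> (x, u) \<in> E}" and eq: "{u, w, x} = {u, w, y}"
    have "x \<in> {u, w, y}" by (simp flip: eq)
    moreover have "x \<noteq> u" "x \<noteq> w" using x assms(1) unfolding tournament_def by auto
    ultimately show "x = y" by simp
  qed
  show "(\<lambda>x. {u, w, x}) ` {x \<in> V. (w, x) \<in> E \<and> (x, u) \<in> E}
      \<subseteq> {t \<in> directed_triangles V E. fst (u, w) \<in> t \<and> snd (u, w) \<in> t}"
  proof (rule image_subsetI)
    fix x assume "x \<in> {x \<in> V. (w, x) \<in> E \<and> (x, u) \<in> E}"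
    moreover have "u \<in> V" "w \<in> V" using assms unfolding tournament_def by auto
    ultimately have "{u, w, x} \<in> directed_triangles V E"
      using assms(2) unfolding directed_triangles_def by blast
    then show "{u, w, x} \<in> {t \<in> directed_triangles V E. fst (u, w) \<in> t \<and> snd (u, w) \<in> t}"
      by simp
  qed
  have "directed_triangles V E \<subseteq> Pow V" unfolding directed_triangles_def by auto
  then have "finite (directed_triangles V E)"
    using assms(1) unfolding tournament_def by (meson finite_Pow_iff finite_subset)
  then show "finite {t \<in> directed_triangles V E. fst (u, w) \<in> t \<and> snd (u, w) \<in> t}"
    by simp
qed

lemma backwards_edge_triangles:
  assumes tour: "tournament V E" and opt: "optimal_ordering V E (P @ w # M @ u # S)"
    and uw: "(u, w) \<in> E"
  defines "B \<equiv> backwards_edges E (P @ w # M @ u # S)"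
  shows "length M + 1 \<le> 2 * triangles_on_edge V E (u, w) + 2 * card {y. (u, y) \<in> B}"
    and "length M + 1 \<le> 2 * triangles_on_edge V E (u, w) + 2 * card {x. (x, w) \<in> B}"
proof -
  have dist: "distinct (P @ w # M @ u # S)" and V: "V = set (P @ w # M @ u # S)"
    using opt unfolding optimal_ordering_def vertex_ordering_def by auto
  define Out where "Out = {x \<in> set M. (u, x) \<in> E}"
  define In where "In = {x \<in> set M. (x, w) \<in> E}"
  have "2 * card (insert w Out) \<le> length (w # M)"
  proof -
    have "{x \<in> set (w # M). (u, x) \<in> E} = insert w Out" using uw by (auto simp: Out_def)
    then show ?thesis
      using optimal_ordering_move_left[OF tour, of P "w # M" u S] opt by simp
  qed
  then have Out_small: "2 * card Out < length M" using dist by (simp add: Out_def)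
  have "2 * card (insert u In) \<le> length (M @ [u])"
  proof -
    have "{x \<in> set (M @ [u]). (x, w) \<in> E} = insert u In" using uw by (auto simp: In_def)
    then show ?thesis
      using optimal_ordering_move_right[OF tour, of P w "M @ [u]" S] opt by simp
  qed
  then have In_small: "2 * card In < length M" using dist by (simp add: In_def)
  have "set M - (Out \<union> In) \<subseteq> {x \<in> V. (w, x) \<in> E \<and> (x, u) \<in> E}"
    using tour dist V unfolding tournament_def Out_def In_def by auto
  then have "card (set M - (Out \<union> In)) \<le> triangles_on_edge V E (u, w)"
    using card_triangle_apexes_le[OF tour uw] by (rule order_trans[OF card_mono, rotated]) (simp add: V)
  moreover have "length M - (card Out + card In) \<le> card (set M - (Out \<union> In))"
    using diff_card_le_card_Diff[of "Out \<union> In" "set M"] card_Un_le[of Out In]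
      distinct_card[of M] dist by (simp add: Out_def In_def)
  ultimately have tri: "length M \<le> triangles_on_edge V E (u, w) + card Out + card In"
    by linarith
  have Out_B: "card Out \<le> card {y. (u, y) \<in> B}" unfolding B_def
    by (rule card_mono[OF finite_successors[OF finite_backwards_edges]])
      (auto simp: Out_def backwards_edges_eq precedes_append)
  have In_B: "card In \<le> card {x. (x, w) \<in> B}" unfolding B_def
    by (rule card_mono[OF finite_predecessors[OF finite_backwards_edges]])
      (auto simp: In_def backwards_edges_eq precedes_append)
  show "length M + 1 \<le> 2 * triangles_on_edge V E (u, w) + 2 * card {y. (u, y) \<in> B}"
    using tri In_small Out_B by linarith
  show "length M + 1 \<le> 2 * triangles_on_edge V E (u, w) + 2 * card {x. (x, w) \<in> B}"
    using tri Out_small In_B by linarith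
qed

lemma split_list_at_two_positions:
  assumes "i < j" and "j < length xs"
  shows "xs = take i xs @ xs ! i # take (j - Suc i) (drop (Suc i) xs) @ xs ! j # drop (Suc j) xs"
proof -
  have "xs = take j xs @ xs ! j # drop (Suc j) xs" using assms(2) by (rule id_take_nth_drop)
  moreover have "take j xs = take i xs @ xs ! i # take (j - Suc i) (drop (Suc i) xs)"
    using assms by (metis Suc_leI id_take_nth_drop le_add_diff_inverse less_trans take_add
        take_Suc_conv_app_nth append_assoc append_Cons append_Nil)
  ultimately show ?thesis by simp
qed

lemma long_backwards_edge_triangles:
  assumes tour: "tournament V E" and opt: "optimal_ordering V E vs"
    and e: "e \<in> long_backwards_edges E vs L"
  defines "B \<equiv> backwards_edges E vs"
  shows "L \<le> 2 * real (triangles_on_edge V E e) + 2 * real (card {y. (fst e, y) \<in> B})"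
    and "L \<le> 2 * real (triangles_on_edge V E e) + 2 * real (card {x. (x, snd e) \<in> B})"
proof -
  obtain i j where ij: "i < j" "j < length vs" and uw: "(vs ! j, vs ! i) \<in> E"
    and e_eq: "e = (vs ! j, vs ! i)" and L: "L \<le> real (j - i)"
    using e unfolding long_backwards_edges_def by blast
  define M where "M = take (j - Suc i) (drop (Suc i) vs)"
  have vs: "take i vs @ vs ! i # M @ vs ! j # drop (Suc j) vs = vs"
    unfolding M_def using split_list_at_two_positions[OF ij] by simp
  have "length M + 1 = j - i" using ij by (simp add: M_def)
  then have "j - i \<le> 2 * triangles_on_edge V E e + 2 * card {y. (fst e, y) \<in> B}"
    and "j - i \<le> 2 * triangles_on_edge V E e + 2 * card {x. (x, snd e) \<in> B}"
    using backwards_edge_triangles[OF tour _ uw, of "take i vs" M "drop (Suc j) vs"] opt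
    unfolding vs B_def e_eq by auto
  then show "L \<le> 2 * real (triangles_on_edge V E e) + 2 * real (card {y. (fst e, y) \<in> B})"
    and "L \<le> 2 * real (triangles_on_edge V E e) + 2 * real (card {x. (x, snd e) \<in> B})"
    using L by (fastforce dest: of_nat_mono)+
qed

lemma card_heavy_vertices:
  fixes R :: "('a \<times> 'b) set"
  assumes "finite R" and "0 < t"
  shows "finite {x. t < real (card {y. (x, y) \<in> R})}"
    and "real (card {x. t < real (card {y. (x, y) \<in> R})}) * t \<le> real (card R)"
proof -
  define H where "H = {x. t < real (card {y. (x, y) \<in> R})}"
  have "H \<subseteq> Domain R"
    using assms(2) by (force simp: H_def card_gt_0_iff dest: order.strict_trans)
  then show fin: "finite H" using assms(1) by (meson finite_Domain finite_subset)
  have "real (card H) * t = (\<Sum>x\<in>H. t)" by simp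
  also have "\<dots> \<le> (\<Sum>x\<in>H. real (card {y. (x, y) \<in> R}))"
    by (rule sum_mono) (simp add: H_def less_imp_le)
  also have "\<dots> = real (card (SIGMA x:H. {y. (x, y) \<in> R}))"
    using fin finite_successors[OF assms(1)] by simp
  also have "\<dots> \<le> real (card R)"
    using assms(1) by (auto intro: card_mono)
  finally show "real (card H) * t \<le> real (card R)" .
qed

lemma card_edges_between_heavy_vertices:
  fixes B :: "('a \<times> 'a) set" and n :: nat
  assumes "finite B" and "B' \<subseteq> B" and card_B: "real (card B) = \<alpha> * real n ^ 2"
    and card_B': "\<alpha> * real n ^ 2 / 4 \<le> real (card B')" and \<alpha>: "\<alpha> \<le> 2 powr (-16)"
  defines "X \<equiv> {u. real n / 64 < real (card {y. (u, y) \<in> B})}"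
    and "Y \<equiv> {w. real n / 64 < real (card {x. (x, w) \<in> B})}"
  shows "real (card (B' \<inter> X \<times> Y)) \<le> real (card B') / 4"
proof (cases "n = 0")
  case True
  then have "B' = {}" using assms(1,2) card_B by auto
  then show ?thesis by simp
next
  case False
  then have t: "0 < real n / 64" by simp
  have "0 \<le> \<alpha>" using card_B False by (metis of_nat_0_le_iff zero_le_mult_iff zero_less_power
        of_nat_0_less_iff not_gr0 not_le)
  have Y_eq: "Y = {w. real n / 64 < real (card {x. (w, x) \<in> B\<inverse>})}" by (simp add: Y_def)
  have X: "finite X" "real (card X) \<le> 64 * \<alpha> * real n"
    using card_heavy_vertices[OF assms(1) t] False card_B
    by (simp_all add: X_def power2_eq_square field_simps)
  have Y: "finite Y" "real (card Y) \<le> 64 * \<alpha> * real n"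
    using card_heavy_vertices[of "B\<inverse>", OF _ t] assms(1) False card_B
    by (simp_all add: Y_eq power2_eq_square field_simps)
  have "real (card (B' \<inter> X \<times> Y)) \<le> real (card X) * real (card Y)"
    using card_mono[of "X \<times> Y" "B' \<inter> X \<times> Y"] X(1) Y(1)
    by (simp add: card_cartesian_product flip: of_nat_mult)
  also have "\<dots> \<le> (64 * \<alpha> * real n) * (64 * \<alpha> * real n)"
    using X(2) Y(2) \<open>0 \<le> \<alpha>\<close> by (intro mult_mono) auto
  also have "\<dots> = (4096 * \<alpha>) * (\<alpha> * real n ^ 2)" by (simp add: power2_eq_square)
  also have "\<dots> \<le> (4096 / 65536) * (\<alpha> * real n ^ 2)"
    using \<alpha> \<open>0 \<le> \<alpha>\<close> by (intro mult_right_mono) (auto simp: powr_minus powr_realpow)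
  also have "\<dots> \<le> real (card B') / 4" using card_B' by simp
  finally show ?thesis .
qed

theorem mainTheorem4:
  fixes V :: "'a set" and E :: "('a \<times> 'a) set" and vs :: "'a list"
    and n :: nat and \<alpha> :: real
  assumes "tournament V E"
    and "card V = n"
    and "optimal_ordering V E vs"
    and "real (card (backwards_edges E vs)) = \<alpha> * real n ^ 2"
    and "real (card (long_backwards_edges E vs (real n / 16))) \<ge> \<alpha> * real n ^ 2 / 4"
    and "\<alpha> \<le> 2 powr (-16)"
  shows "\<exists>B''. B'' \<subseteq> long_backwards_edges E vs (real n / 16) \<and>
           real (card B'') \<ge> real (card (long_backwards_edges E vs (real n / 16))) / 2 \<and>
           (\<forall>e\<in>B''. real (triangles_on_edge V E e) \<ge> real n / 64)"
proof -
  define B where "B = backwards_edges E vs"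
  define B' where "B' = long_backwards_edges E vs (real n / 16)"
  define X where "X = {u. real n / 64 < real (card {y. (u, y) \<in> B})}"
  define Y where "Y = {w. real n / 64 < real (card {x. (x, w) \<in> B})}"
  have "B' \<subseteq> B" unfolding B_def B'_def backwards_edges_def long_backwards_edges_def by blast
  then have "finite B'" using finite_backwards_edges finite_subset unfolding B_def by blast
  have "real (card (B' \<inter> X \<times> Y)) \<le> real (card B') / 4"
    unfolding X_def Y_def using \<open>B' \<subseteq> B\<close> assms(4-6)
    by (intro card_edges_between_heavy_vertices) (auto simp: B_def B'_def finite_backwards_edges)
  then have "real (card B') / 2 \<le> real (card (B' - X \<times> Y))"
    using card_Diff_subset_Int[of B' "X \<times> Y"] card_mono[of B' "B' \<inter> X \<times> Y"] \<open>finite B'\<close>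
    by (simp add: of_nat_diff)
  moreover have "real n / 64 \<le> real (triangles_on_edge V E e)" if "e \<in> B' - X \<times> Y" for e
    using long_backwards_edge_triangles[OF assms(1,3), of e "real n / 16"] that
    unfolding B'_def X_def Y_def B_def by (cases e) auto
  ultimately show ?thesis by (intro exI[of _ "B' - X \<times> Y"]) (auto simp: B'_def)
qed

end
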